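(* Let $d\ge2$, $n\ge1$. For every $n$-qudit unitary $U$, $$\mathrm{CiS}[U]=\max_{O:\ \|O\|_2=1,\ \mathrm{Tr}(O)=0}\big|I[UOU^\dagger]-I[O]\big|.$$
   Context: Let $V=\mathbb{Z}_d\times\mathbb{Z}_d$; for $a=(s,t)\in V$, $P_a=X^sZ^t$ with $X|j\rangle=|j+1\bmod d\rangle$, $Z|j\rangle=e^{2\pi ij/d}|j\rangle$; $P_{\vec a}=\bigotimes_iP_{a_i}$, $|\vec a|=\#\{i:a_i\ne(0,0)\}$. $\|A\|_2=(d^{-n}\mathrm{Tr}(A^\dagger A))^{1/2}$. For $\|O\|_2=1$, $P_O[\vec a]=d^{-2n}|\mathrm{Tr}(OP_{\vec a})|^2$, $I[O]=\sum_{\vec a}|\vec a|P_O[\vec a]$, and $\mathrm{CiS}[U]=\max_{O:\|O\|_2=1}|I[UOU^\dagger]-I[O]|$. *)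

theory Defs
  imports Complex_Main "Jordan_Normal_Form.Matrix"
begin

text \<open>n-qudit operators are complex (d^n x d^n) matrices. The basis index j < d^n
  encodes the computational basis state whose i-th qudit (i < n) is the i-th base-d digit of j.\<close>

definition digit :: "nat \<Rightarrow> nat \<Rightarrow> nat \<Rightarrow> nat" where
  "digit d i j = (j div d ^ i) mod d"

text \<open>Matrix entry (j,k) of X^s Z^t on one qudit, where X|k> = |k+1 mod d>, Z|k> = e^{2 pi i k/d}|k>.\<close>
definition pauli1 :: "nat \<Rightarrow> nat \<times> nat \<Rightarrow> nat \<Rightarrow> nat \<Rightarrow> complex" where
  "pauli1 d a j k = (if j = (k + fst a) mod d then cis (2 * pi * real (snd a * k) / real d) else 0)"

text \<open>Generalized Pauli string P_a = tensor product of P_{a_i}, i < n.\<close>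
definition pauli :: "nat \<Rightarrow> nat \<Rightarrow> (nat \<Rightarrow> nat \<times> nat) \<Rightarrow> complex mat" where
  "pauli d n a = mat (d ^ n) (d ^ n) (\<lambda>(j, k). \<Prod>i<n. pauli1 d (a i) (digit d i j) (digit d i k))"

definition pauli_labels :: "nat \<Rightarrow> nat \<Rightarrow> (nat \<Rightarrow> nat \<times> nat) set" where
  "pauli_labels d n = PiE {..<n} (\<lambda>_. {..<d} \<times> {..<d})"

definition weight :: "nat \<Rightarrow> (nat \<Rightarrow> nat \<times> nat) \<Rightarrow> nat" where
  "weight n a = card {i \<in> {..<n}. a i \<noteq> (0, 0)}"

definition mtrace :: "complex mat \<Rightarrow> complex" where
  "mtrace A = (\<Sum>i<dim_row A. A $$ (i, i))"

definition adj :: "complex mat \<Rightarrow> complex mat" where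
  "adj A = mat (dim_col A) (dim_row A) (\<lambda>(i, j). cnj (A $$ (j, i)))"

definition hs_norm :: "nat \<Rightarrow> nat \<Rightarrow> complex mat \<Rightarrow> real" where
  "hs_norm d n A = sqrt (Re (mtrace (adj A * A)) / real d ^ n)"

definition pauli_weight_dist :: "nat \<Rightarrow> nat \<Rightarrow> complex mat \<Rightarrow> (nat \<Rightarrow> nat \<times> nat) \<Rightarrow> real" where
  "pauli_weight_dist d n Q a = (cmod (mtrace (Q * pauli d n a)))\<^sup>2 / real d ^ (2 * n)"

definition influence :: "nat \<Rightarrow> nat \<Rightarrow> complex mat \<Rightarrow> real" where
  "influence d n Q = (\<Sum>a\<in>pauli_labels d n. real (weight n a) * pauli_weight_dist d n Q a)"

definition CiS :: "nat \<Rightarrow> nat \<Rightarrow> complex mat \<Rightarrow> real" where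
  "CiS d n U = (SUP Q \<in> {Q \<in> carrier_mat (d ^ n) (d ^ n). hs_norm d n Q = 1}.
      \<bar>influence d n (U * Q * adj U) - influence d n Q\<bar>)"

end

theory Submission
  imports Defs
begin

(* Every Pauli string of nonzero weight is traceless, so the weights entering I[O] and
   I[U O U^dagger] do not see the identity component of O: both influences are unchanged under
   O -> O + c I and scale by |c|^2 under O -> c O.  For a normalized O, the traceless part
   B = O - (Tr O / d^n) I satisfies ||B||_2 <= 1 (Pythagoras), so rescaling B to unit norm
   multiplies |I[U B U^dagger] - I[B]| = |I[U O U^dagger] - I[O]| by a factor >= 1; if B = 0 the
   value is 0.  Thus every value of the unrestricted supremum is dominated by one over traceless
   operators, and the two suprema coincide. *)

lemma digit_add_mult_power_below:
  assumes "j < d ^ n" "i < n"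
  shows "digit d i (j + x * d ^ n) = digit d i j"
proof -
  obtain k where n: "n = i + Suc k" using assms(2) by (metis add_Suc_right less_imp_Suc_add)
  have "d ^ n \<noteq> 0" using assms(1) by linarith
  then have "d ^ i \<noteq> 0" using assms(2) by simp
  moreover have "x * d ^ n = (x * d ^ k * d) * d ^ i"
    unfolding n power_add power_Suc by (simp only: mult_ac)
  ultimately have "(j + x * d ^ n) div d ^ i = x * d ^ k * d + j div d ^ i"
    by (metis add.commute div_mult_self1)
  then show ?thesis unfolding digit_def by (simp only: mod_mult_self3)
qed

lemma digit_add_mult_power_top:
  assumes "j < d ^ n" "x < d"
  shows "digit d n (j + x * d ^ n) = x"
proof -
  have "(j + x * d ^ n) div d ^ n = x" using assms by simp
  then show ?thesis unfolding digit_def using assms by simp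
qed

lemma sum_prod_digits:
  fixes h :: "nat \<Rightarrow> nat \<Rightarrow> 'a :: comm_semiring_1"
  assumes "d > 0"
  shows "(\<Sum>j<d ^ n. \<Prod>i<n. h i (digit d i j)) = (\<Prod>i<n. \<Sum>x<d. h i x)"
proof (induction n)
  case 0
  then show ?case by simp
next
  case (Suc n)
  let ?g = "\<lambda>m j. \<Prod>i<m. h i (digit d i j)"
  have "(\<Sum>j<d ^ Suc n. ?g (Suc n) j) = (\<Sum>x<d. \<Sum>j\<in>{x * d ^ n..<x * d ^ n + d ^ n}. ?g (Suc n) j)"
    by (simp add: sum.nat_group mult.commute)
  also have "\<dots> = (\<Sum>x<d. \<Sum>j<d ^ n. ?g (Suc n) (j + x * d ^ n))"
    by (simp add: sum.shift_bounds_nat_ivl[of _ 0, simplified] atLeast0LessThan add.commute)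
  also have "\<dots> = (\<Sum>x<d. \<Sum>j<d ^ n. h n x * ?g n j)"
  proof (intro sum.cong refl)
    fix x j assume "x \<in> {..<d}" "j \<in> {..<d ^ n}"
    then have "?g n (j + x * d ^ n) = ?g n j" and "digit d n (j + x * d ^ n) = x"
      by (auto simp: digit_add_mult_power_below digit_add_mult_power_top intro!: prod.cong)
    then show "?g (Suc n) (j + x * d ^ n) = h n x * ?g n j"
      by (simp add: mult.commute)
  qed
  also have "\<dots> = (\<Sum>x<d. h n x * (\<Prod>i<n. \<Sum>x<d. h i x))"
    by (simp only: sum_distrib_left[symmetric] Suc.IH)
  also have "\<dots> = (\<Prod>i<Suc n. \<Sum>x<d. h i x)"
    by (simp only: sum_distrib_right[symmetric] prod.lessThan_Suc mult.commute)
  finally show ?case .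
qed

lemma sum_cis_eq_0_if_not_dvd:
  assumes "\<not> d dvd t"
  shows "(\<Sum>x<d. cis (2 * pi * real (t * x) / real d)) = 0"
proof (cases "d = 0")
  case False
  then have "d > 0" by simp
  define w where "w = cis (2 * pi * real t / real d)"
  have "w \<noteq> 1"
  proof
    assume "w = 1"
    then obtain k :: int where "2 * pi * real t / real d = 2 * pi * of_int k"
      by (auto simp: w_def complex_eq_iff cos_one_2pi_int)
    with \<open>d > 0\<close> have "real t = real d * of_int k"
      by (simp add: field_simps)
    then have "int t = int d * k"
      by (metis of_int_eq_iff of_int_mult of_int_of_nat_eq)
    then show False using assms by (metis dvdI int_dvd_int_iff)
  qed
  moreover have "w ^ d = 1"
    using \<open>d > 0\<close> by (simp add: w_def DeMoivre cis_multiple_2pi)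
  moreover have "cis (2 * pi * real (t * x) / real d) = w ^ x" for x
    by (simp add: w_def DeMoivre field_simps)
  ultimately show ?thesis by (simp add: geometric_sum)
qed simp

lemma sum_pauli1_diag_eq_0:
  assumes "s < d" "t < d" "(s, t) \<noteq> (0, 0)"
  shows "(\<Sum>x<d. pauli1 d (s, t) x x) = 0"
proof (cases "s = 0")
  case True
  then have "\<not> d dvd t" using assms by (auto dest: dvd_imp_le)
  then show ?thesis using True sum_cis_eq_0_if_not_dvd[of d t] by (simp add: pauli1_def)
next
  case False
  have "x \<noteq> (x + s) mod d" if "x < d" for x
  proof (cases "x + s < d")
    case False
    then have "(x + s) mod d = x + s - d" using that assms(1) by (simp add: le_mod_geq)
    then show ?thesis using False that assms(1) \<open>s \<noteq> 0\<close> by linarith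
  qed (use \<open>s \<noteq> 0\<close> in simp)
  then show ?thesis by (simp add: pauli1_def)
qed

lemma mtrace_pauli_eq_0:
  assumes "a \<in> pauli_labels d n" "weight n a \<noteq> 0"
  shows "mtrace (pauli d n a) = 0"
proof -
  have "{i \<in> {..<n}. a i \<noteq> (0, 0)} \<noteq> {}"
    using assms(2) unfolding weight_def by (metis card.empty)
  then obtain i where i: "i < n" "a i \<noteq> (0, 0)" by auto
  have a_i: "fst (a i) < d" "snd (a i) < d"
    using assms(1) i(1) by (auto simp: pauli_labels_def PiE_iff mem_Times_iff)
  then have "d > 0" by simp
  have "mtrace (pauli d n a) = (\<Sum>j<d ^ n. \<Prod>i<n. pauli1 d (a i) (digit d i j) (digit d i j))"
    unfolding mtrace_def pauli_def by simp
  also have "\<dots> = (\<Prod>i<n. \<Sum>x<d. pauli1 d (a i) x x)"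
    using \<open>d > 0\<close> by (rule sum_prod_digits)
  also have "\<dots> = 0"
    using i a_i sum_pauli1_diag_eq_0[of "fst (a i)" d "snd (a i)"] by (intro prod_zero) auto
  finally show ?thesis .
qed

lemma pauli_carrier: "pauli d n a \<in> carrier_mat (d ^ n) (d ^ n)"
  unfolding pauli_def by simp

lemma adj_carrier: "A \<in> carrier_mat m k \<Longrightarrow> adj A \<in> carrier_mat k m"
  unfolding adj_def by simp

lemma mtrace_add:
  "A \<in> carrier_mat N N \<Longrightarrow> B \<in> carrier_mat N N \<Longrightarrow> mtrace (A + B) = mtrace A + mtrace B"
  by (simp add: mtrace_def sum.distrib)

lemma mtrace_smult: "A \<in> carrier_mat N N \<Longrightarrow> mtrace (c \<cdot>\<^sub>m A) = c * mtrace A"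
  by (simp add: mtrace_def sum_distrib_left)

lemma mtrace_mult:
  assumes "A \<in> carrier_mat N N" "B \<in> carrier_mat N N"
  shows "mtrace (A * B) = (\<Sum>i<N. \<Sum>k<N. A $$ (i, k) * B $$ (k, i))"
  using assms by (auto simp: mtrace_def scalar_prod_def atLeast0LessThan intro!: sum.cong)

lemma mtrace_add_smult_one_mult:
  assumes "Q \<in> carrier_mat N N" "P \<in> carrier_mat N N"
  shows "mtrace ((Q + c \<cdot>\<^sub>m 1\<^sub>m N) * P) = mtrace (Q * P) + c * mtrace P"
proof -
  have "(Q + c \<cdot>\<^sub>m 1\<^sub>m N) * P = Q * P + c \<cdot>\<^sub>m P"
    using assms by (simp add: add_mult_distrib_mat[of _ N N] mult_smult_assoc_mat[of _ N N])
  then show ?thesis using assms by (simp add: mtrace_add[of _ N] mtrace_smult[of _ N])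
qed

lemma influence_add_smult_one:
  assumes "Q \<in> carrier_mat (d ^ n) (d ^ n)"
  shows "influence d n (Q + c \<cdot>\<^sub>m 1\<^sub>m (d ^ n)) = influence d n Q"
  unfolding influence_def
proof (intro sum.cong refl)
  fix a assume a: "a \<in> pauli_labels d n"
  have "weight n a \<noteq> 0 \<Longrightarrow>
      pauli_weight_dist d n (Q + c \<cdot>\<^sub>m 1\<^sub>m (d ^ n)) a = pauli_weight_dist d n Q a"
    using assms mtrace_pauli_eq_0[OF a] pauli_carrier
    by (simp add: pauli_weight_dist_def mtrace_add_smult_one_mult)
  then show "real (weight n a) * pauli_weight_dist d n (Q + c \<cdot>\<^sub>m 1\<^sub>m (d ^ n)) a =
      real (weight n a) * pauli_weight_dist d n Q a"
    by fastforce
qed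

lemma influence_smult:
  assumes "Q \<in> carrier_mat (d ^ n) (d ^ n)"
  shows "influence d n (c \<cdot>\<^sub>m Q) = (cmod c)\<^sup>2 * influence d n Q"
proof -
  have "pauli_weight_dist d n (c \<cdot>\<^sub>m Q) a = (cmod c)\<^sup>2 * pauli_weight_dist d n Q a" for a
    using assms pauli_carrier
    by (simp add: pauli_weight_dist_def mult_smult_assoc_mat[OF assms pauli_carrier]
        mtrace_smult[of _ "d ^ n"] norm_mult power_mult_distrib)
  then show ?thesis by (simp add: influence_def sum_distrib_left mult.left_commute)
qed

lemma conj_add_smult_one:
  assumes "U \<in> carrier_mat N N" "B \<in> carrier_mat N N" "U * adj U = 1\<^sub>m N"
  shows "U * (B + c \<cdot>\<^sub>m 1\<^sub>m N) * adj U = U * B * adj U + c \<cdot>\<^sub>m 1\<^sub>m N"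
proof -
  have "U * (B + c \<cdot>\<^sub>m 1\<^sub>m N) = U * B + c \<cdot>\<^sub>m U"
    using assms
    by (simp add: mult_add_distrib_mat[of _ N N] mult_smult_distrib[OF assms(1) one_carrier_mat])
  then show ?thesis
    using assms adj_carrier[OF assms(1)]
    by (simp add: add_mult_distrib_mat[of _ N N] mult_smult_assoc_mat[of _ N N])
qed

lemma conj_smult:
  assumes "U \<in> carrier_mat N N" "B \<in> carrier_mat N N"
  shows "U * (c \<cdot>\<^sub>m B) * adj U = c \<cdot>\<^sub>m (U * B * adj U)"
  using assms adj_carrier[OF assms(1)]
  by (simp add: mult_smult_distrib[of _ N N] mult_smult_assoc_mat[of _ N N])

definition frobenius_sq :: "complex mat \<Rightarrow> real" where
  "frobenius_sq A = Re (mtrace (adj A * A))"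

lemma frobenius_sq_eq_sum:
  assumes "A \<in> carrier_mat N N"
  shows "frobenius_sq A = (\<Sum>i<N. \<Sum>k<N. (cmod (A $$ (k, i)))\<^sup>2)"
proof -
  have "mtrace (adj A * A) = (\<Sum>i<N. \<Sum>k<N. cnj (A $$ (k, i)) * A $$ (k, i))"
    using assms adj_carrier[OF assms] by (simp add: mtrace_mult[of _ N] adj_def)
  also have "\<dots> = of_real (\<Sum>i<N. \<Sum>k<N. (cmod (A $$ (k, i)))\<^sup>2)"
    by (simp only: of_real_sum complex_norm_square mult.commute)
  finally show ?thesis unfolding frobenius_sq_def by simp
qed

lemma frobenius_sq_nonneg: "A \<in> carrier_mat N N \<Longrightarrow> frobenius_sq A \<ge> 0"
  by (simp add: frobenius_sq_eq_sum sum_nonneg)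

lemma frobenius_sq_eq_0_iff:
  assumes "A \<in> carrier_mat N N"
  shows "frobenius_sq A = 0 \<longleftrightarrow> A = 0\<^sub>m N N"
proof
  assume "frobenius_sq A = 0"
  then have "\<forall>i<N. \<forall>k<N. (cmod (A $$ (k, i)))\<^sup>2 = 0"
    using assms by (simp add: frobenius_sq_eq_sum sum_nonneg_eq_0_iff sum_nonneg)
  then show "A = 0\<^sub>m N N" using assms by (intro eq_matI) auto
qed (simp add: frobenius_sq_eq_sum[of _ N])

lemma frobenius_sq_smult:
  assumes "A \<in> carrier_mat N N"
  shows "frobenius_sq (c \<cdot>\<^sub>m A) = (cmod c)\<^sup>2 * frobenius_sq A"
  using assms by (simp add: frobenius_sq_eq_sum[of _ N] sum_distrib_left norm_mult power_mult_distrib)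

lemma frobenius_sq_sub_trace_part:
  assumes Q: "Q \<in> carrier_mat N N" and c: "c = mtrace Q / of_nat N"
  shows "frobenius_sq (Q - c \<cdot>\<^sub>m 1\<^sub>m N) = frobenius_sq Q - real N * (cmod c)\<^sup>2"
proof -
  have trace: "(\<Sum>i<N. Q $$ (i, i)) = of_nat N * c"
    using c Q by (cases "N = 0") (simp_all add: mtrace_def)
  have cmod_diff: "(cmod (z - c))\<^sup>2 = (cmod z)\<^sup>2 + (cmod c)\<^sup>2 - 2 * Re (z * cnj c)" for z
    unfolding cmod_power2 by (simp add: power2_eq_square algebra_simps)
  have entry: "(cmod ((Q - c \<cdot>\<^sub>m 1\<^sub>m N) $$ (k, i)))\<^sup>2 = (cmod (Q $$ (k, i)))\<^sup>2 +
      (if k = i then (cmod c)\<^sup>2 - 2 * Re (Q $$ (i, i) * cnj c) else 0)" if "i < N" "k < N" for i k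
    using that Q by (auto simp: cmod_diff)
  have "Q - c \<cdot>\<^sub>m 1\<^sub>m N \<in> carrier_mat N N" by (simp add: minus_carrier_mat)
  then have "frobenius_sq (Q - c \<cdot>\<^sub>m 1\<^sub>m N)
      = (\<Sum>i<N. \<Sum>k<N. (cmod ((Q - c \<cdot>\<^sub>m 1\<^sub>m N) $$ (k, i)))\<^sup>2)"
    by (rule frobenius_sq_eq_sum)
  also have "\<dots> = (\<Sum>i<N. \<Sum>k<N. (cmod (Q $$ (k, i)))\<^sup>2 +
      (if k = i then (cmod c)\<^sup>2 - 2 * Re (Q $$ (i, i) * cnj c) else 0))"
    by (intro sum.cong refl entry) auto
  also have "\<dots> = (\<Sum>i<N. (\<Sum>k<N. (cmod (Q $$ (k, i)))\<^sup>2) +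
      ((cmod c)\<^sup>2 - 2 * Re (Q $$ (i, i) * cnj c)))"
    by (auto simp: sum.distrib intro!: sum.cong)
  also have "\<dots> = frobenius_sq Q + real N * (cmod c)\<^sup>2 - 2 * Re ((\<Sum>i<N. Q $$ (i, i)) * cnj c)"
    using Q by (simp add: frobenius_sq_eq_sum[of _ N] sum.distrib sum_subtractf sum_distrib_right
        flip: sum_distrib_left)
  also have "Re ((\<Sum>i<N. Q $$ (i, i)) * cnj c) = real N * (cmod c)\<^sup>2"
    by (simp add: trace mult.assoc complex_mult_cnj cmod_power2 flip: of_real_power)
  finally show ?thesis by simp
qed

lemma hs_norm_eq_1_iff: "d > 0 \<Longrightarrow> hs_norm d n A = 1 \<longleftrightarrow> frobenius_sq A = real d ^ n"
  by (auto simp: hs_norm_def frobenius_sq_def)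

lemma exists_traceless_hs_norm_1:
  assumes "2 \<le> d ^ n"
  shows "\<exists>Q \<in> carrier_mat (d ^ n) (d ^ n). hs_norm d n Q = 1 \<and> mtrace Q = 0"
proof -
  let ?N = "d ^ n"
  define Q where "Q = mat ?N ?N (\<lambda>(i, k). if (i, k) = (0, 1) then complex_of_real (sqrt ?N) else 0)"
  have Q: "Q \<in> carrier_mat ?N ?N" by (simp add: Q_def)
  have "mtrace Q = 0" by (auto simp: Q_def mtrace_def intro: sum.neutral)
  moreover have "frobenius_sq Q = real ?N"
  proof -
    have "frobenius_sq Q = (\<Sum>i<?N. \<Sum>k<?N. if (k, i) = (0, 1) then real ?N else 0)"
      unfolding frobenius_sq_eq_sum[OF Q] by (intro sum.cong refl) (auto simp: Q_def)
    also have "\<dots> = (\<Sum>i<?N. if i = 1 then real ?N else 0)"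
      using assms by (intro sum.cong refl) auto
    also have "\<dots> = real ?N" using assms by simp
    finally show ?thesis .
  qed
  moreover have "d > 0" using assms by (cases "d = 0") (auto simp: power_0_left split: if_splits)
  ultimately show ?thesis using Q by (auto simp: hs_norm_eq_1_iff)
qed

definition influence_change :: "nat \<Rightarrow> nat \<Rightarrow> complex mat \<Rightarrow> complex mat \<Rightarrow> real" where
  "influence_change d n U Q = \<bar>influence d n (U * Q * adj U) - influence d n Q\<bar>"

lemma influence_change_add_smult_one:
  assumes "U \<in> carrier_mat (d ^ n) (d ^ n)" "U * adj U = 1\<^sub>m (d ^ n)"
    and "Q \<in> carrier_mat (d ^ n) (d ^ n)"
  shows "influence_change d n U (Q + c \<cdot>\<^sub>m 1\<^sub>m (d ^ n)) = influence_change d n U Q"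
proof -
  have "U * Q * adj U \<in> carrier_mat (d ^ n) (d ^ n)"
    using assms adj_carrier[OF assms(1)] by simp
  then show ?thesis
    using assms by (simp add: influence_change_def conj_add_smult_one influence_add_smult_one)
qed

lemma influence_change_smult:
  assumes "U \<in> carrier_mat (d ^ n) (d ^ n)" "Q \<in> carrier_mat (d ^ n) (d ^ n)"
  shows "influence_change d n U (c \<cdot>\<^sub>m Q) = (cmod c)\<^sup>2 * influence_change d n U Q"
proof -
  have "U * Q * adj U \<in> carrier_mat (d ^ n) (d ^ n)"
    using assms adj_carrier[OF assms(1)] by simp
  then show ?thesis
    using assms
    by (simp add: influence_change_def conj_smult influence_smult abs_mult
        flip: right_diff_distrib)
qed

lemma influence_change_le_traceless:
  assumes U: "U \<in> carrier_mat (d ^ n) (d ^ n)" "U * adj U = 1\<^sub>m (d ^ n)"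
    and Q: "Q \<in> carrier_mat (d ^ n) (d ^ n)" "hs_norm d n Q = 1"
    and N: "2 \<le> d ^ n"
  shows "\<exists>Q' \<in> carrier_mat (d ^ n) (d ^ n). hs_norm d n Q' = 1 \<and> mtrace Q' = 0 \<and>
    influence_change d n U Q \<le> influence_change d n U Q'"
proof -
  let ?N = "d ^ n"
  have "d > 0" using N by (cases "d = 0") (auto simp: power_0_left split: if_splits)
  define c where "c = mtrace Q / of_nat ?N"
  define B where "B = Q - c \<cdot>\<^sub>m 1\<^sub>m ?N"
  have B: "B \<in> carrier_mat ?N ?N" by (simp add: B_def minus_carrier_mat)
  have "Q = B + c \<cdot>\<^sub>m 1\<^sub>m ?N" using Q by (auto simp: B_def)
  then have change_B: "influence_change d n U Q = influence_change d n U B"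
    using influence_change_add_smult_one[OF U B] by simp
  have trace_B: "mtrace B = 0"
    using Q \<open>d > 0\<close> by (simp add: B_def c_def mtrace_def sum_subtractf)
  have frob_B: "frobenius_sq B \<le> real ?N"
    using frobenius_sq_sub_trace_part[OF Q(1) c_def] Q(2) \<open>d > 0\<close>
    by (simp add: B_def hs_norm_eq_1_iff)
  show ?thesis
  proof (cases "B = 0\<^sub>m ?N ?N")
    case True
    then have "influence_change d n U Q = 0"
      using change_B U adj_carrier[OF U(1)] by (simp add: influence_change_def)
    moreover obtain Q' where "Q' \<in> carrier_mat ?N ?N" "hs_norm d n Q' = 1" "mtrace Q' = 0"
      using exists_traceless_hs_norm_1[OF N] by blast
    ultimately show ?thesis by (auto simp: influence_change_def)
  next
    case False
    then have "frobenius_sq B > 0"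
      using B frobenius_sq_nonneg frobenius_sq_eq_0_iff by (metis less_eq_real_def)
    define s where "s = sqrt (real ?N / frobenius_sq B)"
    have s2: "s\<^sup>2 = real ?N / frobenius_sq B" using \<open>frobenius_sq B > 0\<close> by (simp add: s_def)
    let ?Q' = "complex_of_real s \<cdot>\<^sub>m B"
    have "frobenius_sq ?Q' = real ?N"
      using B s2 \<open>frobenius_sq B > 0\<close> by (simp add: frobenius_sq_smult)
    then have "hs_norm d n ?Q' = 1" using \<open>d > 0\<close> by (simp add: hs_norm_eq_1_iff)
    moreover have "mtrace ?Q' = 0" using B trace_B by (simp add: mtrace_smult)
    moreover have "influence_change d n U B \<le> influence_change d n U ?Q'"
    proof -
      have "1 \<le> s\<^sup>2" using s2 frob_B \<open>frobenius_sq B > 0\<close> by simp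
      moreover have "influence_change d n U ?Q' = s\<^sup>2 * influence_change d n U B"
        using influence_change_smult[OF U(1) B] by simp
      moreover have "0 \<le> influence_change d n U B" by (simp add: influence_change_def)
      ultimately show ?thesis by (simp add: mult_le_cancel_right1)
    qed
    ultimately show ?thesis using B change_B by auto
  qed
qed

lemma SUP_eq_SUP_if_dominated:
  fixes f :: "'a \<Rightarrow> real"
  assumes "T \<subseteq> S" "\<And>x. x \<in> S \<Longrightarrow> \<exists>y \<in> T. f x \<le> f y"
  shows "(SUP x \<in> S. f x) = (SUP y \<in> T. f y)"
proof -
  have "(\<forall>v \<in> f ` S. v \<le> z) \<longleftrightarrow> (\<forall>v \<in> f ` T. v \<le> z)" for z
    using assms by (blast intro: order_trans)
  \<comment> \<open>no boundedness needed: the real Sup depends only on the set of upper bounds\<close>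
  then show ?thesis by (simp add: Sup_real_def)
qed

theorem mainTheorem19:
  fixes d n :: nat and U :: "complex mat"
  assumes "d \<ge> 2" and "n \<ge> 1"
    and "U \<in> carrier_mat (d ^ n) (d ^ n)"
    and "adj U * U = 1\<^sub>m (d ^ n)" and "U * adj U = 1\<^sub>m (d ^ n)"
  shows "CiS d n U =
    (SUP Q \<in> {Q \<in> carrier_mat (d ^ n) (d ^ n). hs_norm d n Q = 1 \<and> mtrace Q = 0}.
       \<bar>influence d n (U * Q * adj U) - influence d n Q\<bar>)"
proof -
  have "2 \<le> d ^ n"
    using assms(1,2) power_increasing[of 1 n d] by simp
  then show ?thesis
    unfolding CiS_def influence_change_def[symmetric]
    \<comment> \<open>only U * adj U = 1 is needed: it makes conjugation fix the identity\<close>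
    using influence_change_le_traceless[OF assms(3,5)]
    by (intro SUP_eq_SUP_if_dominated) auto
qed

end
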